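(* For each $k\in\mathbb{N}$ there exists an instance of the Strip Packing Problem (together with an initial ordering) such that the bottom-left $k$-local search algorithm takes a number of improvement steps that is exponential with respect to the instance size before reaching a local optimum.
   Context: Strip Packing Problem: given a strip width $W>0$ and rectangles $r_1,\dots,r_n$ with widths $w_i\le W$ and heights $h_i$, a packing assigns to each $r_i$ a lower-left corner $(x_i,y_i)$; it is feasible if $x_i\ge 0$, $x_i+w_i\le W$, $y_i\ge 0$ and the open rectangles $(x_i,x_i+w_i)\times(y_i,y_i+h_i)$ are pairwise disjoint; no rotations. The height of a packing is $\max_i(y_i+h_i)$. Bottom-left algorithm: given an ordering, place the first rectangle at $(0,0)$ and then each subsequent rectangle at a feasible position $(x,y)$ (feasible together with those already placed) with $(y,x)$ lexicographically minimal. Bottom-left $k$-local search algorithm: start with an initial ordering and its bottom-left packing. In each iteration (improvement step), choose a new ordering obtained from the current one by permuting at most $k$ rectangles in the ordering such that the bottom-left packing of the new ordering has strictly smaller height, and replace the current ordering by it. Stop when no such improvement exists (a local optimum). *)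

theory Defs
  imports Main "HOL.Real"
begin

text \<open>An instance: strip width W and a list of rectangles (width, height), indexed 0..n-1.
  An ordering is a list of indices, a permutation of [0..<n].
  A packing assigns to each index its lower-left corner (x, y).\<close>

type_synonym rect = "real \<times> real"

definition valid_instance :: "real \<Rightarrow> rect list \<Rightarrow> bool" where
  "valid_instance W rs \<longleftrightarrow> W > 0 \<and> rs \<noteq> [] \<and>
     (\<forall>r \<in> set rs. 0 < fst r \<and> fst r \<le> W \<and> 0 < snd r)"

definition is_ordering :: "rect list \<Rightarrow> nat list \<Rightarrow> bool" where
  "is_ordering rs \<sigma> \<longleftrightarrow> distinct \<sigma> \<and> set \<sigma> = {..<length rs}"

definition open_rect :: "real \<times> real \<Rightarrow> rect \<Rightarrow> (real \<times> real) set" where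
  "open_rect p r = {q. fst p < fst q \<and> fst q < fst p + fst r \<and>
                        snd p < snd q \<and> snd q < snd p + snd r}"

definition feasible_pos :: "real \<Rightarrow> rect list \<Rightarrow> (nat \<Rightarrow> real \<times> real) \<Rightarrow> nat set
                             \<Rightarrow> rect \<Rightarrow> real \<times> real \<Rightarrow> bool" where
  "feasible_pos W rs pos S r p \<longleftrightarrow>
     0 \<le> fst p \<and> fst p + fst r \<le> W \<and> 0 \<le> snd p \<and>
     (\<forall>j \<in> S. open_rect p r \<inter> open_rect (pos j) (rs ! j) = {})"

definition is_BL_packing :: "real \<Rightarrow> rect list \<Rightarrow> nat list \<Rightarrow> (nat \<Rightarrow> real \<times> real) \<Rightarrow> bool" where
  "is_BL_packing W rs \<sigma> pos \<longleftrightarrow>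
     (\<forall>i < length \<sigma>.
        let S = set (take i \<sigma>); r = rs ! (\<sigma> ! i); p = pos (\<sigma> ! i) in
        feasible_pos W rs pos S r p \<and>
        (\<forall>q. feasible_pos W rs pos S r q \<longrightarrow>
              snd p < snd q \<or> (snd p = snd q \<and> fst p \<le> fst q)))"

definition packing_height :: "rect list \<Rightarrow> (nat \<Rightarrow> real \<times> real) \<Rightarrow> real" where
  "packing_height rs pos = Max ((\<lambda>i. snd (pos i) + snd (rs ! i)) ` {..<length rs})"

definition bl_step :: "nat \<Rightarrow> real \<Rightarrow> rect list \<Rightarrow> nat list \<Rightarrow> nat list \<Rightarrow> bool" where
  "bl_step k W rs \<sigma> \<sigma>' \<longleftrightarrow>
     is_ordering rs \<sigma> \<and> is_ordering rs \<sigma>' \<and>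
     card {i. i < length rs \<and> \<sigma> ! i \<noteq> \<sigma>' ! i} \<le> k \<and>
     (\<exists>pos pos'. is_BL_packing W rs \<sigma> pos \<and> is_BL_packing W rs \<sigma>' pos' \<and>
                 packing_height rs pos' < packing_height rs pos)"

definition local_opt :: "nat \<Rightarrow> real \<Rightarrow> rect list \<Rightarrow> nat list \<Rightarrow> bool" where
  "local_opt k W rs \<sigma> \<longleftrightarrow> \<not> (\<exists>\<sigma>'. bl_step k W rs \<sigma> \<sigma>')"

text \<open>The number of improvement steps is length - 1.\<close>
definition bl_run :: "nat \<Rightarrow> real \<Rightarrow> rect list \<Rightarrow> nat list list \<Rightarrow> bool" where
  "bl_run k W rs \<sigma>s \<longleftrightarrow> \<sigma>s \<noteq> [] \<and> is_ordering rs (hd \<sigma>s) \<and>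
     (\<forall>i. Suc i < length \<sigma>s \<longrightarrow> bl_step k W rs (\<sigma>s ! i) (\<sigma>s ! Suc i)) \<and>
     local_opt k W rs (last \<sigma>s)"

end

theory Submission
  imports Defs
begin

(* With rectangles of width 1 in a strip of width 2, the bottom-left rule stacks every rectangle
   on the lower of two columns (the left one on ties), so a packing has height
   (total height + |a - b|) / 2, where a and b are the final heights of the columns.
   The instance consists of a unit square followed by n pairs of heights B + 2^(i+1) and B,
   with B larger than any imbalance that can arise.  The two rectangles of pair i then always go
   to different columns, and the imbalance d < 2^(i+1) becomes |d - 2^(i+1)| or d + 2^(i+1),
   depending on which of the two comes first.  Encoding these choices as bit vectors, the
   reflected Gray code lists all 2^n of them so that the final imbalance strictly decreases while
   consecutive vectors differ in one bit, i.e. consecutive orderings differ by swapping two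
   adjacent rectangles.  This is a run of 2^n - 1 improvement steps of 2-local search on 2n+1
   rectangles. *)

section \<open>Bottom-left packing of unit-width rectangles in a strip of width 2\<close>

lemma open_rect_disjoint_iff:
  assumes "0 < fst r1" "0 < snd r1" "0 < fst r2" "0 < snd r2"
  shows "open_rect p1 r1 \<inter> open_rect p2 r2 = {} \<longleftrightarrow>
    fst p1 + fst r1 \<le> fst p2 \<or> fst p2 + fst r2 \<le> fst p1 \<or>
    snd p1 + snd r1 \<le> snd p2 \<or> snd p2 + snd r2 \<le> snd p1"
  (is "?disjoint \<longleftrightarrow> ?separated")
proof
  assume ?disjoint
  show ?separated
  proof (rule ccontr)
    assume "\<not> ?separated"
    then have "((max (fst p1) (fst p2) + min (fst p1 + fst r1) (fst p2 + fst r2)) / 2,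
        (max (snd p1) (snd p2) + min (snd p1 + snd r1) (snd p2 + snd r2)) / 2)
      \<in> open_rect p1 r1 \<inter> open_rect p2 r2"
      using assms unfolding open_rect_def by (auto simp: max_def min_def)
    with \<open>?disjoint\<close> show False by blast
  qed
qed (auto simp: open_rect_def)

definition unit_widths :: "rect list \<Rightarrow> bool" where
  "unit_widths rs \<longleftrightarrow> (\<forall>r \<in> set rs. fst r = 1 \<and> 0 < snd r)"

abbreviation heights :: "rect list \<Rightarrow> nat list \<Rightarrow> real list" where
  "heights rs \<sigma> \<equiv> map (\<lambda>j. snd (rs ! j)) \<sigma>"

abbreviation column_gap :: "real \<times> real \<Rightarrow> real" where
  "column_gap c \<equiv> \<bar>fst c - snd c\<bar>"

abbreviation yx_less_eq :: "real \<times> real \<Rightarrow> real \<times> real \<Rightarrow> bool" where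
  "yx_less_eq p q \<equiv> snd p < snd q \<or> snd p = snd q \<and> fst p \<le> fst q"

text \<open>Only the columns \<open>x = 0\<close> and \<open>x = 1\<close> are ever used; \<open>c\<close> holds their current heights.\<close>

definition bl_slot :: "real \<times> real \<Rightarrow> real \<times> real" where
  "bl_slot c = (if fst c \<le> snd c then (0, fst c) else (1, snd c))"

definition bl_stack :: "real \<times> real \<Rightarrow> real \<Rightarrow> real \<times> real" where
  "bl_stack c h = (if fst c \<le> snd c then (fst c + h, snd c) else (fst c, snd c + h))"

definition column_heights :: "rect list \<Rightarrow> nat list \<Rightarrow> real \<times> real" where
  "column_heights rs \<sigma> = foldl bl_stack (0, 0) (heights rs \<sigma>)"

definition two_column_packing :: "rect list \<Rightarrow> nat list \<Rightarrow> nat \<Rightarrow> real \<times> real" where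
  "two_column_packing rs \<sigma> j = bl_slot (column_heights rs (takeWhile (\<lambda>i. i \<noteq> j) \<sigma>))"

definition column_stacked ::
    "rect list \<Rightarrow> (nat \<Rightarrow> real \<times> real) \<Rightarrow> nat set \<Rightarrow> real \<Rightarrow> real \<Rightarrow> bool" where
  "column_stacked rs pos S x t \<longleftrightarrow> 0 \<le> t \<and>
     (\<forall>y. 0 \<le> y \<and> y < t \<longrightarrow>
        (\<exists>j\<in>S. fst (pos j) = x \<and> snd (pos j) \<le> y \<and> y < snd (pos j) + snd (rs ! j))) \<and>
     (t = 0 \<or> (\<exists>j\<in>S. fst (pos j) = x \<and> snd (pos j) + snd (rs ! j) = t))"

definition two_columns ::
    "rect list \<Rightarrow> (nat \<Rightarrow> real \<times> real) \<Rightarrow> nat set \<Rightarrow> real \<times> real \<Rightarrow> bool" where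
  "two_columns rs pos S c \<longleftrightarrow>
     (\<forall>j\<in>S. fst (rs ! j) = 1 \<and> 0 < snd (rs ! j) \<and> 0 \<le> snd (pos j) \<and>
        (fst (pos j) = 0 \<and> snd (pos j) + snd (rs ! j) \<le> fst c \<or>
         fst (pos j) = 1 \<and> snd (pos j) + snd (rs ! j) \<le> snd c)) \<and>
     column_stacked rs pos S 0 (fst c) \<and> column_stacked rs pos S 1 (snd c)"

lemma column_stacked_insert:
  "column_stacked rs pos S x t \<Longrightarrow> column_stacked rs pos (insert j S) x t"
  unfolding column_stacked_def by blast

lemma column_stacked_insert_top:
  assumes "column_stacked rs pos S x t" "pos j = (x, t)" "0 < snd (rs ! j)"
  shows "column_stacked rs pos (insert j S) x (t + snd (rs ! j))"
  unfolding column_stacked_def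
proof (intro conjI allI impI)
  fix y assume "0 \<le> y \<and> y < t + snd (rs ! j)"
  then show "\<exists>i\<in>insert j S. fst (pos i) = x \<and> snd (pos i) \<le> y \<and> y < snd (pos i) + snd (rs ! i)"
    using assms(1,2) unfolding column_stacked_def by (cases "y < t") auto
qed (use assms in \<open>auto simp: column_stacked_def\<close>)

lemma two_columns_insert:
  assumes cols: "two_columns rs pos S c" and rj: "fst (rs ! j) = 1" "0 < snd (rs ! j)"
    and slot: "pos j = bl_slot c"
  shows "two_columns rs pos (insert j S) (bl_stack c (snd (rs ! j)))"
proof (cases "fst c \<le> snd c")
  case True
  then have "pos j = (0, fst c)" using slot by (simp add: bl_slot_def)
  moreover have "0 \<le> fst c" using cols by (simp add: two_columns_def column_stacked_def)
  ultimately show ?thesis using True cols rj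
    by (auto simp: two_columns_def bl_stack_def column_stacked_insert column_stacked_insert_top)
next
  case False
  then have "pos j = (1, snd c)" using slot by (simp add: bl_slot_def)
  moreover have "0 \<le> snd c" using cols by (simp add: two_columns_def column_stacked_def)
  ultimately show ?thesis using False cols rj
    by (auto simp: two_columns_def bl_stack_def column_stacked_insert column_stacked_insert_top)
qed

lemma column_stacked_excludes:
  assumes col: "column_stacked rs pos S x t" and cols: "two_columns rs pos S c" and "0 < h"
    and disj: "\<forall>j\<in>S. open_rect q (1, h) \<inter> open_rect (pos j) (rs ! j) = {}"
    and "0 \<le> snd q" "snd q < t"
  shows "fst q + 1 \<le> x \<or> x + 1 \<le> fst q"
proof -
  obtain j where j: "j \<in> S" "fst (pos j) = x" "snd (pos j) \<le> snd q"
      "snd q < snd (pos j) + snd (rs ! j)"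
    using col \<open>0 \<le> snd q\<close> \<open>snd q < t\<close> unfolding column_stacked_def by blast
  have rj: "fst (rs ! j) = 1" "0 < snd (rs ! j)" using cols j(1) by (auto simp: two_columns_def)
  have "open_rect q (1, h) \<inter> open_rect (pos j) (rs ! j) = {}" using disj j(1) by blast
  then have "fst q + 1 \<le> fst (pos j) \<or> fst (pos j) + fst (rs ! j) \<le> fst q \<or>
      snd q + h \<le> snd (pos j) \<or> snd (pos j) + snd (rs ! j) \<le> snd q"
    using open_rect_disjoint_iff[of "(1, h)" "rs ! j" q "pos j"] rj \<open>0 < h\<close> by simp
  then show ?thesis using j rj \<open>0 < h\<close> by linarith
qed

lemma bl_slot_feasible:
  assumes cols: "two_columns rs pos S c" and "0 < h"
  shows "feasible_pos 2 rs pos S (1, h) (bl_slot c)"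
  unfolding feasible_pos_def
proof (intro conjI ballI)
  fix j assume "j \<in> S"
  then have rj: "fst (rs ! j) = 1" "0 < snd (rs ! j)"
    and col: "fst (pos j) = 0 \<and> snd (pos j) + snd (rs ! j) \<le> fst c \<or>
      fst (pos j) = 1 \<and> snd (pos j) + snd (rs ! j) \<le> snd c"
    using cols by (auto simp: two_columns_def)
  have "fst (bl_slot c) + 1 \<le> fst (pos j) \<or> fst (pos j) + fst (rs ! j) \<le> fst (bl_slot c) \<or>
      snd (pos j) + snd (rs ! j) \<le> snd (bl_slot c)"
    using col rj by (auto simp: bl_slot_def)
  then show "open_rect (bl_slot c) (1, h) \<inter> open_rect (pos j) (rs ! j) = {}"
    using open_rect_disjoint_iff[of "(1, h)" "rs ! j" "bl_slot c" "pos j"] rj \<open>0 < h\<close> by auto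
qed (use cols in \<open>auto simp: bl_slot_def two_columns_def column_stacked_def\<close>)

lemma bl_slot_least:
  assumes cols: "two_columns rs pos S c" and "0 < h" and feas: "feasible_pos 2 rs pos S (1, h) q"
  shows "yx_less_eq (bl_slot c) q"
proof -
  have q: "0 \<le> fst q" "fst q \<le> 1" "0 \<le> snd q"
    and disj: "\<forall>j\<in>S. open_rect q (1, h) \<inter> open_rect (pos j) (rs ! j) = {}"
    using feas by (auto simp: feasible_pos_def)
  have left: "column_stacked rs pos S 0 (fst c)" and right: "column_stacked rs pos S 1 (snd c)"
    using cols by (auto simp: two_columns_def)
  have "1 \<le> fst q" if "snd q < fst c"
    using column_stacked_excludes[OF left cols \<open>0 < h\<close> disj q(3) that] q by linarith
  moreover have "fst q \<le> 0" if "snd q < snd c"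
    using column_stacked_excludes[OF right cols \<open>0 < h\<close> disj q(3) that] q by linarith
  ultimately show ?thesis using q unfolding bl_slot_def by force
qed

lemma two_column_packing_slot:
  "j \<notin> set ys \<Longrightarrow> two_column_packing rs (ys @ j # zs) j = bl_slot (column_heights rs ys)"
  by (auto simp: two_column_packing_def takeWhile_append)

lemma two_columns_prefix:
  assumes "unit_widths rs" "distinct (ys @ zs)" "set (ys @ zs) \<subseteq> {..<length rs}"
  shows "two_columns rs (two_column_packing rs (ys @ zs)) (set ys) (column_heights rs ys)"
  using assms(2,3)
proof (induction ys arbitrary: zs rule: rev_induct)
  case Nil
  then show ?case by (simp add: two_columns_def column_stacked_def column_heights_def)
next
  case (snoc j ys)
  have "two_columns rs (two_column_packing rs (ys @ j # zs)) (set ys) (column_heights rs ys)"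
    using snoc by simp
  moreover have "fst (rs ! j) = 1" "0 < snd (rs ! j)"
    using assms(1) snoc.prems(2) by (auto simp: unit_widths_def)
  moreover have "two_column_packing rs (ys @ j # zs) j = bl_slot (column_heights rs ys)"
    using snoc.prems(1) by (simp add: two_column_packing_slot)
  ultimately show ?case
    using two_columns_insert by (simp add: column_heights_def)
qed

lemma two_column_packing_is_BL:
  assumes "unit_widths rs" "is_ordering rs \<sigma>"
  shows "is_BL_packing 2 rs \<sigma> (two_column_packing rs \<sigma>)"
  unfolding is_BL_packing_def Let_def
proof (intro allI impI)
  fix i assume i: "i < length \<sigma>"
  let ?pos = "two_column_packing rs \<sigma>" and ?S = "set (take i \<sigma>)"
  let ?c = "column_heights rs (take i \<sigma>)"
  have \<sigma>: "\<sigma> = take i \<sigma> @ \<sigma> ! i # drop (Suc i) \<sigma>" using i by (simp add: id_take_nth_drop)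
  have ordering: "distinct \<sigma>" "set \<sigma> = {..<length rs}"
    using assms(2) by (auto simp: is_ordering_def)
  have cols: "two_columns rs ?pos ?S ?c"
    using two_columns_prefix[OF assms(1), of "take i \<sigma>" "drop i \<sigma>"] ordering by simp
  have "\<sigma> ! i \<notin> ?S"
    using ordering(1) i by (auto simp: in_set_conv_nth nth_eq_iff_index_eq)
  then have slot: "?pos (\<sigma> ! i) = bl_slot ?c"
    by (subst \<sigma>, subst (2) \<sigma>) (rule two_column_packing_slot)
  have "rs ! (\<sigma> ! i) \<in> set rs" using ordering(2) i by (metis lessThan_iff nth_mem)
  then obtain h where "rs ! (\<sigma> ! i) = (1, h)" "0 < h"
    using assms(1) unfolding unit_widths_def by (metis prod.collapse)
  then show "feasible_pos 2 rs ?pos ?S (rs ! (\<sigma> ! i)) (?pos (\<sigma> ! i)) \<and>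
      (\<forall>q. feasible_pos 2 rs ?pos ?S (rs ! (\<sigma> ! i)) q \<longrightarrow> yx_less_eq (?pos (\<sigma> ! i)) q)"
    using bl_slot_feasible[OF cols] bl_slot_least[OF cols] unfolding slot by simp
qed

lemma packing_height_two_column_packing:
  assumes "unit_widths rs" "rs \<noteq> []" "is_ordering rs \<sigma>"
  shows "packing_height rs (two_column_packing rs \<sigma>) =
    max (fst (column_heights rs \<sigma>)) (snd (column_heights rs \<sigma>))"
proof -
  let ?pos = "two_column_packing rs \<sigma>" and ?c = "column_heights rs \<sigma>"
  let ?top = "\<lambda>j. snd (?pos j) + snd (rs ! j)"
  have "set \<sigma> = {..<length rs}" "distinct \<sigma>" using assms(3) by (auto simp: is_ordering_def)
  then have cols: "two_columns rs ?pos {..<length rs} ?c"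
    using two_columns_prefix[OF assms(1), of \<sigma> "[]"] by simp
  have below: "0 < ?top j \<and> ?top j \<le> max (fst ?c) (snd ?c)" if "j < length rs" for j
    using cols that unfolding two_columns_def by force
  have "0 < max (fst ?c) (snd ?c)" using below[of 0] assms(2) by auto
  moreover have "fst ?c = 0 \<or> fst ?c \<in> ?top ` {..<length rs}"
    and "snd ?c = 0 \<or> snd ?c \<in> ?top ` {..<length rs}"
    using cols unfolding two_columns_def column_stacked_def image_iff by metis+
  ultimately have "max (fst ?c) (snd ?c) \<in> ?top ` {..<length rs}"
    by (cases "fst ?c \<le> snd ?c") (auto simp: max_def)
  then show ?thesis
    unfolding packing_height_def using below by (intro Max_eqI) auto
qed

lemma BL_packing_unique:
  assumes "is_BL_packing W rs \<sigma> pos" "is_BL_packing W rs \<sigma> pos'" "j \<in> set \<sigma>"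
  shows "pos j = pos' j"
proof -
  have "\<forall>j\<in>set (take i \<sigma>). pos j = pos' j" if "i \<le> length \<sigma>" for i
    using that
  proof (induction i)
    case (Suc i)
    then have i: "i < length \<sigma>" and IH: "\<forall>j\<in>set (take i \<sigma>). pos j = pos' j" by simp_all
    let ?S = "set (take i \<sigma>)" and ?r = "rs ! (\<sigma> ! i)"
    have same: "feasible_pos W rs pos ?S ?r q = feasible_pos W rs pos' ?S ?r q" for q
      using IH by (simp add: feasible_pos_def)
    have "feasible_pos W rs pos ?S ?r (pos (\<sigma> ! i))" "feasible_pos W rs pos' ?S ?r (pos' (\<sigma> ! i))"
      and "\<forall>q. feasible_pos W rs pos ?S ?r q \<longrightarrow> yx_less_eq (pos (\<sigma> ! i)) q"
      and "\<forall>q. feasible_pos W rs pos' ?S ?r q \<longrightarrow> yx_less_eq (pos' (\<sigma> ! i)) q"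
      using assms(1,2) i unfolding is_BL_packing_def Let_def by auto
    then have "pos (\<sigma> ! i) = pos' (\<sigma> ! i)"
      unfolding same by (metis prod_eqI order_antisym less_asym)
    then show ?case using IH i by (simp add: take_Suc_conv_app_nth)
  qed simp
  then show ?thesis using assms(3) by (metis order_refl take_all)
qed

lemma packing_height_BL_unique:
  assumes "is_ordering rs \<sigma>" "is_BL_packing W rs \<sigma> pos" "is_BL_packing W rs \<sigma> pos'"
  shows "packing_height rs pos = packing_height rs pos'"
proof -
  have "pos j = pos' j" if "j < length rs" for j
    using BL_packing_unique[OF assms(2,3)] assms(1) that by (auto simp: is_ordering_def)
  then show ?thesis
    unfolding packing_height_def by (intro arg_cong[where f = Max] image_cong) auto
qed

lemma bl_step_unit_widths_iff:
  assumes "unit_widths rs"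
  shows "bl_step k 2 rs \<sigma> \<sigma>' \<longleftrightarrow> is_ordering rs \<sigma> \<and> is_ordering rs \<sigma>' \<and>
    card {i. i < length rs \<and> \<sigma> ! i \<noteq> \<sigma>' ! i} \<le> k \<and>
    packing_height rs (two_column_packing rs \<sigma>') < packing_height rs (two_column_packing rs \<sigma>)"
proof
  assume "bl_step k 2 rs \<sigma> \<sigma>'"
  then obtain pos pos' where ord: "is_ordering rs \<sigma>" and ord': "is_ordering rs \<sigma>'"
    and "card {i. i < length rs \<and> \<sigma> ! i \<noteq> \<sigma>' ! i} \<le> k"
    and BL: "is_BL_packing 2 rs \<sigma> pos" and BL': "is_BL_packing 2 rs \<sigma>' pos'"
    and "packing_height rs pos' < packing_height rs pos"
    unfolding bl_step_def by blast
  moreover have "packing_height rs (two_column_packing rs \<sigma>) = packing_height rs pos"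
    using packing_height_BL_unique[OF ord two_column_packing_is_BL[OF assms ord] BL] .
  moreover have "packing_height rs (two_column_packing rs \<sigma>') = packing_height rs pos'"
    using packing_height_BL_unique[OF ord' two_column_packing_is_BL[OF assms ord'] BL'] .
  ultimately show "is_ordering rs \<sigma> \<and> is_ordering rs \<sigma>' \<and>
    card {i. i < length rs \<and> \<sigma> ! i \<noteq> \<sigma>' ! i} \<le> k \<and>
    packing_height rs (two_column_packing rs \<sigma>') < packing_height rs (two_column_packing rs \<sigma>)"
    by simp
qed (use two_column_packing_is_BL[OF assms] in \<open>auto simp: bl_step_def\<close>)

lemma foldl_bl_stack_sum:
  "fst (foldl bl_stack c hs) + snd (foldl bl_stack c hs) = fst c + snd c + sum_list hs"
  by (induction hs arbitrary: c) (auto simp: bl_stack_def)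

lemma column_heights_sum:
  assumes "is_ordering rs \<sigma>"
  shows "fst (column_heights rs \<sigma>) + snd (column_heights rs \<sigma>) = sum_list (map snd rs)"
proof -
  have "sum_list (heights rs \<sigma>) = (\<Sum>j<length rs. snd (rs ! j))"
    using assms by (simp add: is_ordering_def sum_list_distinct_conv_sum_set)
  also have "\<dots> = sum_list (map snd rs)"
    by (simp add: sum_list_sum_nth atLeast0LessThan)
  finally show ?thesis by (simp add: column_heights_def foldl_bl_stack_sum)
qed

text \<open>Two rectangles taller than the gap end up in different columns.\<close>
lemma column_gap_bl_stack_pair:
  "column_gap c < p \<Longrightarrow> column_gap c < q \<Longrightarrow>
    column_gap (foldl bl_stack c [p, q]) = \<bar>column_gap c - (p - q)\<bar>"
  by (auto simp: bl_stack_def abs_if)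

section \<open>The instance\<close>

text \<open>Rectangle 0 is a unit square; rectangles \<open>2i+1\<close> and \<open>2i+2\<close> form pair \<open>i\<close>, of heights
  \<open>B + 2^(i+1)\<close> and \<open>B\<close>, where \<open>B = 2^(n+2)\<close> exceeds every gap that can occur.\<close>
definition hard_instance :: "nat \<Rightarrow> rect list" where
  "hard_instance n = map (\<lambda>j. if j = 0 then (1, 1)
     else if odd j then (1, 2^(n+2) + 2^((j+1) div 2)) else (1, 2^(n+2))) [0..<2*n+1]"

definition pair_order :: "nat \<Rightarrow> bool \<Rightarrow> nat list" where
  "pair_order i b = (if b then [2*i+1, 2*i+2] else [2*i+2, 2*i+1])"

fun pairs_order :: "nat \<Rightarrow> bool list \<Rightarrow> nat list" where
  "pairs_order i [] = []"
| "pairs_order i (b # bs) = pair_order i b @ pairs_order (Suc i) bs"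

definition hard_ordering :: "bool list \<Rightarrow> nat list" where
  "hard_ordering v = 0 # pairs_order 0 v"

definition pair_shift :: "nat \<Rightarrow> bool \<Rightarrow> real" where
  "pair_shift i b = (if b then 2^(i+1) else - (2^(i+1)))"

fun imbalance_from :: "nat \<Rightarrow> real \<Rightarrow> bool list \<Rightarrow> real" where
  "imbalance_from i d [] = d"
| "imbalance_from i d (b # bs) = imbalance_from (Suc i) \<bar>d - pair_shift i b\<bar> bs"

definition imbalance :: "bool list \<Rightarrow> real" where
  "imbalance v = imbalance_from 0 1 v"

lemma length_hard_instance: "length (hard_instance n) = 2*n+1"
  by (simp add: hard_instance_def)

lemma hard_instance_nth:
  "j < 2*n+1 \<Longrightarrow> hard_instance n ! j = (if j = 0 then (1, 1)
     else if odd j then (1, 2^(n+2) + 2^((j+1) div 2)) else (1, 2^(n+2)))"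
  by (simp add: hard_instance_def del: upt_Suc)

lemma unit_widths_hard_instance: "unit_widths (hard_instance n)"
  by (auto simp: unit_widths_def hard_instance_def add_pos_pos)

lemma valid_instance_hard_instance: "valid_instance 2 (hard_instance n)"
  using unit_widths_hard_instance[of n]
  by (auto simp: valid_instance_def unit_widths_def hard_instance_def)

lemma set_pairs_order: "set (pairs_order i bs) = {2*i+1..<2*(i + length bs)+1}"
proof (induction bs arbitrary: i)
  case (Cons b bs)
  have "{2*i+1..<2*(i + length (b # bs))+1} =
      {2*i+1, 2*i+2} \<union> {2*Suc i+1..<2*(Suc i + length bs)+1}"
    by auto
  then show ?case using Cons by (auto simp: pair_order_def)
qed simp

lemma distinct_pairs_order: "distinct (pairs_order i bs)"
  by (induction bs arbitrary: i) (auto simp: pair_order_def set_pairs_order)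

lemma pairs_order_append:
  "pairs_order i (xs @ ys) = pairs_order i xs @ pairs_order (i + length xs) ys"
  by (induction xs arbitrary: i) auto

lemma hard_ordering_is_ordering: "is_ordering (hard_instance (length v)) (hard_ordering v)"
  using distinct_pairs_order[of 0 v] set_pairs_order[of 0 v]
  by (auto simp: is_ordering_def hard_ordering_def length_hard_instance)

lemma column_gap_pairs_order:
  assumes "i + length bs \<le> n" "column_gap c < 2^(i+1)"
  shows "column_gap (foldl bl_stack c (heights (hard_instance n) (pairs_order i bs))) =
    imbalance_from i (column_gap c) bs"
  using assms
proof (induction bs arbitrary: i c)
  case (Cons b bs)
  let ?B = "2^(n+2) :: real"
  have "(2::real)^(i+1) \<le> ?B" using Cons.prems(1) by (intro power_increasing) auto
  then have small: "column_gap c < ?B" "column_gap c < ?B + 2^(i+1)"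
    using Cons.prems(2) by (simp_all add: add_strict_increasing)
  have pair: "heights (hard_instance n) (pair_order i b) =
      (if b then [?B + 2^(i+1), ?B] else [?B, ?B + 2^(i+1)])"
    using Cons.prems(1) by (simp add: pair_order_def hard_instance_nth)
  define c' where "c' = foldl bl_stack c (heights (hard_instance n) (pair_order i b))"
  have c': "column_gap c' = \<bar>column_gap c - pair_shift i b\<bar>"
    unfolding c'_def pair using small column_gap_bl_stack_pair[of c "?B + 2^(i+1)" ?B]
      column_gap_bl_stack_pair[of c ?B "?B + 2^(i+1)"]
    by (cases b) (simp_all add: pair_shift_def)
  also have "\<dots> < 2^(Suc i + 1)"
    using Cons.prems(2) by (auto simp: pair_shift_def)
  finally show ?case
    using Cons.IH[of "Suc i" c'] Cons.prems(1) c' by (simp add: c'_def)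
qed simp

lemma hard_ordering_height:
  assumes "length v = n"
  shows "packing_height (hard_instance n) (two_column_packing (hard_instance n) (hard_ordering v)) =
    (sum_list (map snd (hard_instance n)) + imbalance v) / 2"
proof -
  let ?rs = "hard_instance n"
  let ?c = "column_heights ?rs (hard_ordering v)"
  have ordering: "is_ordering ?rs (hard_ordering v)"
    using hard_ordering_is_ordering[of v] assms by simp
  have "?c = foldl bl_stack (1, 0) (heights ?rs (pairs_order 0 v))"
    by (simp add: column_heights_def hard_ordering_def hard_instance_nth bl_stack_def)
  then have "column_gap ?c = imbalance v"
    using column_gap_pairs_order[of 0 v n "(1, 0)"] assms by (simp add: imbalance_def)
  moreover have "fst ?c + snd ?c = sum_list (map snd ?rs)"
    using column_heights_sum[OF ordering] .
  moreover have "max (fst ?c) (snd ?c) = (fst ?c + snd ?c + column_gap ?c) / 2"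
    by (simp add: max_def abs_if)
  moreover have "?rs \<noteq> []" by (simp add: hard_instance_def)
  ultimately show ?thesis
    using packing_height_two_column_packing[OF unit_widths_hard_instance _ ordering] by simp
qed

section \<open>The reflected Gray code\<close>

definition one_flip :: "bool list \<Rightarrow> bool list \<Rightarrow> bool" where
  "one_flip u w \<longleftrightarrow> (\<exists>xs b ys. u = xs @ b # ys \<and> w = xs @ (\<not> b) # ys)"

lemma one_flip_sym:
  assumes "one_flip u w"
  shows "one_flip w u"
proof -
  obtain xs b ys where "u = xs @ b # ys" "w = xs @ (\<not> b) # ys"
    using assms by (auto simp: one_flip_def)
  then show ?thesis
    unfolding one_flip_def by (intro exI[of _ xs] exI[of _ "\<not> b"] exI[of _ ys]) simp
qed

lemma one_flip_snoc: "one_flip u w \<Longrightarrow> one_flip (u @ [c]) (w @ [c])"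
  unfolding one_flip_def by fastforce

lemma one_flip_last: "one_flip (v @ [False]) (v @ [True])"
  unfolding one_flip_def by (intro exI[of _ v] exI[of _ False] exI[of _ "[]"]) simp

lemma one_flip_hard_ordering_diff:
  assumes "one_flip u w"
  shows "card {i. i < l \<and> hard_ordering u ! i \<noteq> hard_ordering w ! i} \<le> 2"
proof -
  obtain xs b ys where u: "u = xs @ b # ys" and w: "w = xs @ (\<not> b) # ys"
    using assms by (auto simp: one_flip_def)
  define pre where "pre = 0 # pairs_order 0 xs"
  define post where "post = pairs_order (Suc (length xs)) ys"
  have "hard_ordering u = pre @ pair_order (length xs) b @ post"
    and "hard_ordering w = pre @ pair_order (length xs) (\<not> b) @ post"
    unfolding u w pre_def post_def hard_ordering_def by (simp_all add: pairs_order_append)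
  then have "{i. i < l \<and> hard_ordering u ! i \<noteq> hard_ordering w ! i} \<subseteq>
      {length pre, Suc (length pre)}"
    by (auto simp: nth_append nth_Cons' pair_order_def)
  then have "card {i. i < l \<and> hard_ordering u ! i \<noteq> hard_ordering w ! i} \<le>
      card {length pre, Suc (length pre)}"
    by (rule card_mono[rotated]) simp
  then show ?thesis by simp
qed

fun gray_code :: "nat \<Rightarrow> bool list list" where
  "gray_code 0 = [[]]"
| "gray_code (Suc m) =
     map (\<lambda>v. v @ [False]) (gray_code m) @ map (\<lambda>v. v @ [True]) (rev (gray_code m))"

lemma length_gray_code: "length (gray_code m) = 2^m"
  by (induction m) simp_all

lemma imbalance_from_snoc:
  "imbalance_from i d (bs @ [b]) = \<bar>imbalance_from i d bs - pair_shift (i + length bs) b\<bar>"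
  by (induction bs arbitrary: i d) simp_all

lemma imbalance_snoc: "imbalance (v @ [b]) = \<bar>imbalance v - pair_shift (length v) b\<bar>"
  by (simp add: imbalance_def imbalance_from_snoc)

lemma gray_code_imbalance:
  "v \<in> set (gray_code m) \<Longrightarrow> length v = m \<and> 0 < imbalance v \<and> imbalance v < 2^(m+1)"
proof (induction m arbitrary: v)
  case 0
  then show ?case by (simp add: imbalance_def)
next
  case (Suc m)
  then obtain u where u: "u \<in> set (gray_code m)" "v = u @ [False] \<or> v = u @ [True]" by auto
  then show ?case using Suc.IH[OF u(1)] by (auto simp: imbalance_snoc pair_shift_def)
qed

text \<open>Appending \<open>False\<close> adds \<open>2^(m+1)\<close> to the imbalance, while appending \<open>True\<close> reflects it
  at \<open>2^(m+1)\<close>, which undoes the reversal of the second half.\<close>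
lemma gray_code_descends:
  "successively (\<lambda>u w. one_flip u w \<and> imbalance w < imbalance u) (gray_code m)"
proof (induction m)
  case (Suc m)
  have low: "imbalance (v @ [False]) = imbalance v + 2^(m+1)"
    and high: "imbalance (v @ [True]) = 2^(m+1) - imbalance v"
    and bounds: "0 < imbalance v" "imbalance v < 2^(m+1)"
    if "v \<in> set (gray_code m)" for v
    using gray_code_imbalance[OF that] by (auto simp: imbalance_snoc pair_shift_def)
  have "gray_code m \<noteq> []" using length_gray_code[of m] by auto
  then show ?case
    using Suc.IH low high bounds
    by (auto simp: successively_append_iff successively_map last_map hd_map hd_rev
        one_flip_last intro: one_flip_snoc one_flip_sym elim!: successively_mono)
qed simp

section \<open>Long runs of local search\<close>

lemma gray_code_bl_steps:
  assumes "2 \<le> k"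
  shows "successively (bl_step k 2 (hard_instance n)) (map hard_ordering (gray_code n))"
  unfolding successively_map
proof (rule successively_mono[OF gray_code_descends])
  let ?rs = "hard_instance n"
  let ?H = "\<lambda>\<sigma>. packing_height ?rs (two_column_packing ?rs \<sigma>)"
  fix u w
  assume u: "u \<in> set (gray_code n)" and w: "w \<in> set (gray_code n)"
    and flip: "one_flip u w \<and> imbalance w < imbalance u"
  have len: "length u = n" "length w = n" using gray_code_imbalance u w by auto
  then have "is_ordering ?rs (hard_ordering u)" "is_ordering ?rs (hard_ordering w)"
    using hard_ordering_is_ordering[of u] hard_ordering_is_ordering[of w] by simp_all
  moreover have "?H (hard_ordering w) < ?H (hard_ordering u)"
    using hard_ordering_height[of u n] hard_ordering_height[of w n] len flip by simp
  moreover have "card {i. i < length ?rs \<and> hard_ordering u ! i \<noteq> hard_ordering w ! i} \<le> k"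
    using one_flip_hard_ordering_diff[of u w "length ?rs"] flip assms by linarith
  ultimately show "bl_step k 2 ?rs (hard_ordering u) (hard_ordering w)"
    by (simp add: bl_step_unit_widths_iff[OF unit_widths_hard_instance])
qed

lemma finite_orderings: "finite {\<sigma>. is_ordering rs \<sigma>}"
  by (rule finite_subset[OF _ finite_subset_distinct[OF finite_lessThan[of "length rs"]]])
    (auto simp: is_ordering_def)

lemma successively_extend_to_terminal:
  fixes g :: "'a \<Rightarrow> 'b::linorder"
  assumes fin: "finite {x. Q x}" and dec: "\<And>x y. R x y \<Longrightarrow> Q y \<and> g y < g x"
  shows "xs \<noteq> [] \<Longrightarrow> successively R xs \<Longrightarrow>
    \<exists>ys. successively R (xs @ ys) \<and> \<not> (\<exists>y. R (last (xs @ ys)) y)"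
proof (induction "card {x. Q x \<and> g x < g (last xs)}" arbitrary: xs rule: less_induct)
  case less
  show ?case
  proof (cases "\<exists>y. R (last xs) y")
    case False
    then show ?thesis using less.prems by (intro exI[of _ "[]"]) simp
  next
    case True
    then obtain y where y: "R (last xs) y" ..
    then have "{x. Q x \<and> g x < g y} \<subset> {x. Q x \<and> g x < g (last xs)}"
      using dec by fastforce
    then have "card {x. Q x \<and> g x < g (last (xs @ [y]))} < card {x. Q x \<and> g x < g (last xs)}"
      by (simp add: psubset_card_mono finite_subset[OF _ fin])
    moreover have "successively R (xs @ [y])"
      using less.prems y by (simp add: successively_append_iff)
    ultimately obtain ys where
      "successively R ((xs @ [y]) @ ys)" "\<not> (\<exists>z. R (last ((xs @ [y]) @ ys)) z)"
      using less.hyps by blast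
    then show ?thesis by (intro exI[of _ "y # ys"]) simp
  qed
qed

lemma bl_run_iff:
  "bl_run k W rs \<sigma>s \<longleftrightarrow> \<sigma>s \<noteq> [] \<and> is_ordering rs (hd \<sigma>s) \<and>
    successively (bl_step k W rs) \<sigma>s \<and> local_opt k W rs (last \<sigma>s)"
  by (simp add: bl_run_def successively_conv_nth)

lemma hard_instance_long_run:
  assumes "2 \<le> k"
  shows "\<exists>\<sigma>s. bl_run k 2 (hard_instance n) \<sigma>s \<and> 2^n \<le> length \<sigma>s"
proof -
  let ?rs = "hard_instance n"
  let ?H = "\<lambda>\<sigma>. packing_height ?rs (two_column_packing ?rs \<sigma>)"
  define gray_run where "gray_run = map hard_ordering (gray_code n)"
  have "gray_run \<noteq> []" using length_gray_code[of n] by (auto simp: gray_run_def)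
  have descent: "is_ordering ?rs \<sigma>' \<and> ?H \<sigma>' < ?H \<sigma>" if "bl_step k 2 ?rs \<sigma> \<sigma>'" for \<sigma> \<sigma>'
    using that by (simp add: bl_step_unit_widths_iff[OF unit_widths_hard_instance])
  obtain ys where run: "successively (bl_step k 2 ?rs) (gray_run @ ys)"
    and stop: "\<not> (\<exists>\<sigma>'. bl_step k 2 ?rs (last (gray_run @ ys)) \<sigma>')"
    using successively_extend_to_terminal[OF finite_orderings descent \<open>gray_run \<noteq> []\<close>]
      gray_code_bl_steps[OF assms] unfolding gray_run_def by blast
  have "hd (gray_code n) \<in> set (gray_code n)"
    using \<open>gray_run \<noteq> []\<close> by (simp add: gray_run_def)
  then have "length (hd (gray_code n)) = n" using gray_code_imbalance by blast
  then have "is_ordering ?rs (hard_ordering (hd (gray_code n)))"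
    using hard_ordering_is_ordering by metis
  then have "is_ordering ?rs (hd (gray_run @ ys))"
    using \<open>gray_run \<noteq> []\<close> by (simp add: gray_run_def hd_map)
  then have "bl_run k 2 ?rs (gray_run @ ys)"
    using run stop \<open>gray_run \<noteq> []\<close> by (simp add: bl_run_iff local_opt_def)
  moreover have "2^n \<le> length (gray_run @ ys)" by (simp add: gray_run_def length_gray_code)
  ultimately show ?thesis by blast
qed

lemma five_fourths_power_le: "3 \<le> n \<Longrightarrow> (5/4 :: real)^(2*n+1) \<le> 2^n - 1"
proof (induction rule: dec_induct)
  case base
  then show ?case by (simp add: power_divide)
next
  case (step n)
  have "(5/4 :: real)^(2 * Suc n + 1) = 25/16 * (5/4)^(2*n+1)" by (simp add: power_add)
  also have "\<dots> \<le> 25/16 * (2^n - 1)" using step.IH by simp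
  also have "\<dots> \<le> 2^Suc n - 1" using one_le_power[of "2::real" n] by simp
  finally show ?case .
qed

theorem theorem6:
  fixes k :: nat
  assumes "k \<ge> 2"
  shows "\<exists>c::real. c > 1 \<and>
           (\<forall>N::nat. \<exists>W rs \<sigma>s. valid_instance W rs \<and> length rs \<ge> N \<and>
               bl_run k W rs \<sigma>s \<and> real (length \<sigma>s - 1) \<ge> c ^ length rs)"
proof -
  have "\<exists>W rs \<sigma>s. valid_instance W rs \<and> N \<le> length rs \<and> bl_run k W rs \<sigma>s \<and>
      (5/4)^length rs \<le> real (length \<sigma>s - 1)" for N :: nat
  proof -
    let ?n = "N + 3"
    obtain \<sigma>s where run: "bl_run k 2 (hard_instance ?n) \<sigma>s" and long: "2^?n \<le> length \<sigma>s"
      using hard_instance_long_run[OF assms] by blast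
    have "(5/4 :: real)^length (hard_instance ?n) \<le> 2^?n - 1"
      using five_fourths_power_le[of ?n] by (simp add: length_hard_instance)
    also have "\<dots> = real (2^?n - 1)" by simp
    also have "\<dots> \<le> real (length \<sigma>s - 1)" using long by (intro of_nat_mono diff_le_mono)
    finally have "(5/4)^length (hard_instance ?n) \<le> real (length \<sigma>s - 1)" .
    moreover have "N \<le> length (hard_instance ?n)" by (simp add: length_hard_instance)
    ultimately show ?thesis using run valid_instance_hard_instance by blast
  qed
  then show ?thesis by (intro exI[of _ "5/4"]) simp
qed

end
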